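(* Let $n\ge1$, $P\in[1/n,1]$, and let $H_\alpha$ be the Rényi entropy of order $\alpha\in(0,1)\cup(1,\infty)$, or the Shannon entropy for $\alpha=1$. Under the constraints $\vec\lambda\in\mathbb{R}^n$, $\vec\lambda\ge0$, $\sum_k\lambda_k=1$, $\sum_k\lambda_k^2=P$, the minimum and maximum of $H_\alpha(\vec\lambda)$ are attained by vectors with at most two distinct non-null entries, i.e. (up to permutation) $\vec\lambda=(a_\pm,\dots,a_\pm,b_\pm,\dots,b_\pm,0,\dots,0)$ with $a_\pm$ repeated $n_a$ times and $b_\pm$ repeated $n_b$ times ($n_a+n_b\le n$), where $$a_\pm:=\frac{1\pm\sqrt{\frac{n_b}{n_a}(P(n_a+n_b)-1)}}{n_a+n_b},\qquad b_\pm:=\frac{1\mp\sqrt{\frac{n_a}{n_b}(P(n_a+n_b)-1)}}{n_a+n_b}$$ are the only two assignments of the two values satisfying the constraints. Explicitly, $$\min H_\alpha(\vec\lambda)=\min_{n_a,n_b,\pm}\frac{1}{1-\alpha}\ln\big(n_aa_\pm^\alpha+n_bb_\pm^\alpha\big),\qquad \max H_\alpha(\vec\lambda)=\max_{n_a,n_b,\pm}\frac{1}{1-\alpha}\ln\big(n_aa_\pm^\alpha+n_bb_\pm^\alpha\big),$$ where the optimizations on the right range over positive integers $n_a,n_b$ with $n_a+n_b\le n$ and the sign choices for which $a_\pm,b_\pm$ are real and nonnegative (for $\alpha=1$ the expression is replaced by its limit $-n_aa_\pm\ln a_\pm-n_bb_\pm\ln b_\pm$).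
   Context: For a probability vector $\vec\lambda$, the Rényi entropy of order $\alpha$ is $H_\alpha(\vec\lambda):=(1-\alpha)^{-1}\ln\sum_k\lambda_k^\alpha$, and $H_1(\vec\lambda):=\lim_{\alpha\to1}H_\alpha(\vec\lambda)=-\sum_k\lambda_k\ln\lambda_k$ (with $0\ln0:=0$). *)

theory Defs
  imports Complex_Main
begin

text \<open>Renyi entropy of order alpha of the probability vector (lam 0, ..., lam (n-1));
  for alpha = 1 it is the Shannon entropy (with 0 ln 0 = 0, automatic since 0 * _ = 0).
  Note 0 powr alpha = 0, matching 0^alpha = 0 for alpha > 0.\<close>
definition renyi :: "real \<Rightarrow> nat \<Rightarrow> (nat \<Rightarrow> real) \<Rightarrow> real" where
  "renyi \<alpha> n lam =
     (if \<alpha> = 1 then - (\<Sum>k<n. lam k * ln (lam k))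
      else ln (\<Sum>k<n. lam k powr \<alpha>) / (1 - \<alpha>))"

definition feasible :: "nat \<Rightarrow> real \<Rightarrow> (nat \<Rightarrow> real) \<Rightarrow> bool" where
  "feasible n P lam \<longleftrightarrow>
     (\<forall>k<n. 0 \<le> lam k) \<and> (\<Sum>k<n. lam k) = 1 \<and> (\<Sum>k<n. (lam k)\<^sup>2) = P"

text \<open>The two values a_s, b_s for sign s (s = 1 gives a_+, b_+; s = -1 gives a_-, b_-).\<close>
definition aval :: "real \<Rightarrow> nat \<Rightarrow> nat \<Rightarrow> real \<Rightarrow> real" where
  "aval P na nb s = (1 + s * sqrt (real nb / real na * (P * real (na + nb) - 1))) / real (na + nb)"

definition bval :: "real \<Rightarrow> nat \<Rightarrow> nat \<Rightarrow> real \<Rightarrow> real" where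
  "bval P na nb s = (1 - s * sqrt (real na / real nb * (P * real (na + nb) - 1))) / real (na + nb)"

definition cands :: "nat \<Rightarrow> real \<Rightarrow> (nat \<times> nat \<times> real) set" where
  "cands n P = {(na, nb, s). 0 < na \<and> 0 < nb \<and> na + nb \<le> n \<and> s \<in> {1, -1} \<and>
      1 \<le> P * real (na + nb) \<and> 0 \<le> aval P na nb s \<and> 0 \<le> bval P na nb s}"

definition hval :: "real \<Rightarrow> real \<Rightarrow> nat \<times> nat \<times> real \<Rightarrow> real" where
  "hval \<alpha> P c = (case c of (na, nb, s) \<Rightarrow>
     (let a = aval P na nb s; b = bval P na nb s in
      if \<alpha> = 1 then - real na * a * ln a - real nb * b * ln b
      else ln (real na * a powr \<alpha> + real nb * b powr \<alpha>) / (1 - \<alpha>)))"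

definition two_valued :: "nat \<Rightarrow> (nat \<Rightarrow> real) \<Rightarrow> bool" where
  "two_valued n lam \<longleftrightarrow> card ((lam ` {..<n}) - {0}) \<le> 2"

end

theory Submission
  imports Defs "HOL-Analysis.Analysis" "HOL-Real_Asymp.Real_Asymp"
begin

(* The feasible set is compact, so H_alpha attains its minimum and maximum on it. At a
   feasible vector with three distinct positive entries x, y, z the two constraints leave a
   curve along which these three entries can move. To first order, the change of
   sum_k g(lambda_k) (g the summand of H_alpha) along it is proportional to
   g'(x)(y - z) + g'(y)(z - x) + g'(z)(x - y), which the mean value theorem shows to be
   nonzero whenever g'' is injective; this is the case for every alpha except alpha = 2, and
   H_2 = -ln P is constant anyway. So both extrema are attained at vectors with at most two
   distinct nonzero entries, and for these the constraints force the values a_pm, b_pm. *)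

lemma two_value_system_iff:
  assumes "0 < na" "0 < nb" "1 \<le> P * real (na + nb)"
  shows "real na * a + real nb * b = 1 \<and> real na * a\<^sup>2 + real nb * b\<^sup>2 = P \<longleftrightarrow>
         (\<exists>s\<in>{1, -1::real}. a = aval P na nb s \<and> b = bval P na nb s)"
proof -
  define N where "N = real (na + nb)"
  define ra where "ra = sqrt (real nb / real na * (P * N - 1))"
  define rb where "rb = sqrt (real na / real nb * (P * N - 1))"
  have N: "N = real na + real nb" "N \<noteq> 0" "real na \<noteq> 0" "real nb \<noteq> 0"
    using assms by (auto simp: N_def)
  have ra2: "ra\<^sup>2 = real nb / real na * (P * N - 1)" and rb2: "rb\<^sup>2 = real na / real nb * (P * N - 1)"
    using assms by (simp_all add: ra_def rb_def N_def)
  have "(real na * ra)\<^sup>2 = (real nb * rb)\<^sup>2"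
    using N unfolding power_mult_distrib ra2 rb2 by (simp add: field_simps power2_eq_square)
  moreover have "0 \<le> ra" "0 \<le> rb" using assms by (simp_all add: ra_def rb_def N_def)
  ultimately have r: "real na * ra = real nb * rb"
    by (simp add: power2_eq_iff_nonneg)
  have ab: "aval P na nb s = (1 + s * ra) / N" "bval P na nb s = (1 - s * rb) / N" for s
    by (simp_all add: aval_def bval_def ra_def rb_def N_def)
  show ?thesis
  proof
    assume sums: "real na * a + real nb * b = 1 \<and> real na * a\<^sup>2 + real nb * b\<^sup>2 = P"
    then have nbb: "real nb * b = 1 - real na * a" by simp
    have "real na * (N * a - 1)\<^sup>2 = real nb * (P * N - 1)"
    proof -
      have "P = real na * a\<^sup>2 + real nb * b\<^sup>2" using sums by simp
      then have "real nb * (P * N) = N * (real na * real nb * a\<^sup>2 + (real nb * b)\<^sup>2)"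
        by (simp add: power2_eq_square algebra_simps)
      then show ?thesis unfolding nbb N(1) by (simp add: power2_eq_square algebra_simps)
    qed
    then have "(N * a - 1)\<^sup>2 = ra\<^sup>2" using N unfolding ra2 by (simp add: field_simps)
    then have "N * a - 1 = 1 * ra \<or> N * a - 1 = -1 * ra"
      by (simp add: power2_eq_iff)
    then obtain s :: real where s: "s \<in> {1, -1}" "N * a - 1 = s * ra"
      by blast
    have a: "a = (1 + s * ra) / N" using s(2) N by (simp add: field_simps)
    have "real nb * b = (real nb - s * (real na * ra)) / N"
      using nbb N unfolding a by (simp add: field_simps)
    also have "\<dots> = real nb * ((1 - s * rb) / N)"
      unfolding r by (simp add: field_simps)
    finally have "real nb * b = real nb * ((1 - s * rb) / N)" .
    then have "b = (1 - s * rb) / N" using N(4) by (metis mult_cancel_left)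
    then show "\<exists>s\<in>{1, -1::real}. a = aval P na nb s \<and> b = bval P na nb s"
      using s(1) a by (auto simp: ab)
  next
    assume "\<exists>s\<in>{1, -1::real}. a = aval P na nb s \<and> b = bval P na nb s"
    then obtain s :: real where s: "s \<in> {1, -1}" "a = (1 + s * ra) / N" "b = (1 - s * rb) / N"
      unfolding ab by blast
    have s2: "s\<^sup>2 = 1" using s(1) by auto
    have r0: "real na * ra - real nb * rb = 0" using r by simp
    have "real na * a + real nb * b = (real na + real nb + s * (real na * ra - real nb * rb)) / N"
      unfolding s(2,3) using N(2) by (simp add: field_simps)
    also have "\<dots> = 1" unfolding r0 using N(1,2) by simp
    finally have sum1: "real na * a + real nb * b = 1" .
    have "real na * a\<^sup>2 + real nb * b\<^sup>2
        = (real na + real nb + 2 * s * (real na * ra - real nb * rb)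
            + s\<^sup>2 * (real na * ra\<^sup>2 + real nb * rb\<^sup>2)) / N\<^sup>2"
      unfolding s(2,3) using N(2) by (simp add: field_simps power2_eq_square)
    also have "\<dots> = (N + N * (P * N - 1)) / N\<^sup>2"
      unfolding r0 s2 ra2 rb2 N(1) using N(3,4) by (simp add: field_simps)
    also have "\<dots> = P" using N(2) by (simp add: field_simps power2_eq_square)
    finally show "real na * a + real nb * b = 1 \<and> real na * a\<^sup>2 + real nb * b\<^sup>2 = P"
      using sum1 by simp
  qed
qed

definition block_vector :: "nat \<Rightarrow> nat \<Rightarrow> real \<Rightarrow> real \<Rightarrow> nat \<Rightarrow> real" where
  "block_vector na nb a b k = (if k < na then a else if k < na + nb then b else 0)"

lemma sum_block_vector:
  assumes "na + nb \<le> n" "h 0 = 0"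
  shows "(\<Sum>k<n. h (block_vector na nb a b k)) = real na * h a + real nb * h b"
proof -
  let ?f = "\<lambda>k. h (block_vector na nb a b k)"
  have "(\<Sum>k<n. ?f k) = sum ?f {0..<na} + sum ?f {na..<na+nb} + sum ?f {na+nb..<n}"
    using assms by (simp add: atLeast0LessThan[symmetric] sum.atLeastLessThan_concat)
  also have "sum ?f {0..<na} = real na * h a"
    by (simp add: block_vector_def)
  also have "sum ?f {na..<na+nb} = real nb * h b"
    by (simp add: block_vector_def)
  also have "sum ?f {na+nb..<n} = 0"
    using assms by (intro sum.neutral) (auto simp: block_vector_def)
  finally show ?thesis by simp
qed

lemma two_valued_block_vector: "two_valued n (block_vector na nb a b)"
proof -
  have "block_vector na nb a b ` {..<n} - {0} \<subseteq> {a, b}"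
    by (auto simp: block_vector_def)
  then have "card (block_vector na nb a b ` {..<n} - {0}) \<le> card {a, b}"
    by (intro card_mono) auto
  also have "\<dots> \<le> 2" by (simp add: card_insert_le_m1)
  finally show ?thesis by (simp add: two_valued_def)
qed

lemma renyi_eq_hval:
  assumes "\<And>h. h 0 = 0 \<Longrightarrow>
    (\<Sum>k<n. h (lam k)) = real na * h (aval P na nb s) + real nb * h (bval P na nb s)"
  shows "renyi \<alpha> n lam = hval \<alpha> P (na, nb, s)"
  using assms[of "\<lambda>x. x * ln x"] assms[of "\<lambda>x. x powr \<alpha>"]
  by (simp add: renyi_def hval_def Let_def algebra_simps)

lemma
  assumes "(na, nb, s) \<in> cands n P"
  shows feasible_candidate: "feasible n P (block_vector na nb (aval P na nb s) (bval P na nb s))"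
    and renyi_candidate:
      "renyi \<alpha> n (block_vector na nb (aval P na nb s) (bval P na nb s)) = hval \<alpha> P (na, nb, s)"
proof -
  let ?a = "aval P na nb s" and ?b = "bval P na nb s"
  have c: "0 < na" "0 < nb" "na + nb \<le> n" "s \<in> {1, -1}" "1 \<le> P * real (na + nb)" "0 \<le> ?a" "0 \<le> ?b"
    using assms by (auto simp: cands_def)
  have "real na * ?a + real nb * ?b = 1 \<and> real na * ?a\<^sup>2 + real nb * ?b\<^sup>2 = P"
    using two_value_system_iff[OF c(1,2,5)] c(4) by blast
  then show "feasible n P (block_vector na nb ?a ?b)"
    using c sum_block_vector[OF c(3), of "\<lambda>x. x"] sum_block_vector[OF c(3), of "\<lambda>x. x\<^sup>2"]
    by (auto simp: feasible_def block_vector_def)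
  show "renyi \<alpha> n (block_vector na nb ?a ?b) = hval \<alpha> P (na, nb, s)"
    by (rule renyi_eq_hval) (rule sum_block_vector[OF c(3)])
qed

lemma sum_by_values:
  fixes lam :: "nat \<Rightarrow> real"
  assumes "h 0 = 0"
  shows "(\<Sum>k<n. h (lam k)) = (\<Sum>v\<in>lam ` {..<n} - {0}. real (card {k. k < n \<and> lam k = v}) * h v)"
proof -
  have "(\<Sum>k<n. h (lam k)) = (\<Sum>v\<in>lam ` {..<n}. \<Sum>k\<in>{k. k < n \<and> lam k = v}. h (lam k))"
    by (subst sum.image_gen[of _ _ lam]) auto
  also have "\<dots> = (\<Sum>v\<in>lam ` {..<n}. real (card {k. k < n \<and> lam k = v}) * h v)"
    by (intro sum.cong) auto
  also have "\<dots> = (\<Sum>v\<in>lam ` {..<n} - {0}. real (card {k. k < n \<and> lam k = v}) * h v)"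
    using assms by (simp add: sum_diff1)
  finally show ?thesis .
qed

lemma two_valued_block_form:
  assumes "feasible n P lam" "two_valued n lam" "2 \<le> n"
  obtains na nb a b where "0 < na" "0 < nb" "na + nb \<le> n" "0 \<le> a" "0 \<le> b"
    "\<And>h. h 0 = 0 \<Longrightarrow> (\<Sum>k<n. h (lam k)) = real na * h a + real nb * h b"
proof -
  define V where "V = lam ` {..<n} - {0}"
  define c where "c v = card {k. k < n \<and> lam k = v}" for v
  have sums: "(\<Sum>k<n. h (lam k)) = (\<Sum>v\<in>V. real (c v) * h v)" if "h 0 = 0" for h
    using sum_by_values[of h, OF that] by (simp add: V_def c_def)
  have V_pos: "0 < v" "0 < c v" if "v \<in> V" for v
    using that assms(1) by (force simp: V_def c_def feasible_def card_gt_0_iff)+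
  have "(\<Sum>v\<in>V. real (c v)) = (\<Sum>k<n. if lam k = 0 then 0 else 1)"
    using sums[of "\<lambda>x. if x = 0 then 0 else 1"] by (simp add: V_def)
  also have "\<dots> \<le> (\<Sum>k<n. 1)" by (intro sum_mono) auto
  finally have c_le: "(\<Sum>v\<in>V. real (c v)) \<le> real n" by simp
  have "V \<noteq> {}"
    using sums[of "\<lambda>x. x"] assms(1) by (auto simp: feasible_def)
  then have "0 < card V" by (simp add: V_def card_gt_0_iff)
  then have "card V = 1 \<or> card V = 2"
    using assms(2) by (auto simp: two_valued_def V_def)
  then show thesis
  proof
    assume "card V = 1"
    then obtain a where V: "V = {a}" by (auto simp: card_1_singleton_iff)
    then have a: "0 < a" "0 < c a" using V_pos by auto
    \<comment> \<open>use the blocks (a, 0) if a occurs once, else 1 and c a - 1 copies of a\<close>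
    show thesis
    proof (cases "c a = 1")
      case True
      then show thesis
        using that[of 1 1 a 0] a assms(3) sums by (simp add: V)
    next
      case False
      then show thesis
        using that[of 1 "c a - 1" a a] a c_le sums by (simp add: V of_nat_diff algebra_simps)
    qed
  next
    assume "card V = 2"
    then obtain a b where V: "V = {a, b}" "a \<noteq> b" by (auto simp: card_2_iff)
    then have "0 < a" "0 < b" "0 < c a" "0 < c b" using V_pos by auto
    then show thesis
      using that[of "c a" "c b" a b] c_le sums by (simp add: V)
  qed
qed

lemma two_valued_renyi_in_candidates:
  assumes "feasible n P lam" "two_valued n lam" "2 \<le> n"
  shows "\<exists>c\<in>cands n P. renyi \<alpha> n lam = hval \<alpha> P c"
proof -
  obtain na nb a b where blocks: "0 < na" "0 < nb" "na + nb \<le> n" "0 \<le> a" "0 \<le> b"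
    and sums: "\<And>h. h 0 = 0 \<Longrightarrow> (\<Sum>k<n. h (lam k)) = real na * h a + real nb * h b"
    using two_valued_block_form[OF assms] by blast
  have sum1: "real na * a + real nb * b = 1" and sum2: "real na * a\<^sup>2 + real nb * b\<^sup>2 = P"
    using sums[of "\<lambda>x. x"] sums[of "\<lambda>x. x\<^sup>2"] assms(1) by (simp_all add: feasible_def)
  have "(real na + real nb) * (real na * a\<^sup>2 + real nb * b\<^sup>2) - (real na * a + real nb * b)\<^sup>2
      = real na * real nb * (a - b)\<^sup>2"
    by (simp add: algebra_simps power2_eq_square)
  then have PN: "1 \<le> P * real (na + nb)"
    unfolding sum1 sum2 by (simp add: algebra_simps)
  then obtain s where s: "s \<in> {1, -1::real}" "a = aval P na nb s" "b = bval P na nb s"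
    using two_value_system_iff[OF blocks(1,2)] sum1 sum2 by blast
  have "(na, nb, s) \<in> cands n P"
    using blocks s PN by (auto simp: cands_def)
  moreover have "renyi \<alpha> n lam = hval \<alpha> P (na, nb, s)"
    by (rule renyi_eq_hval) (use sums s in simp)
  ultimately show ?thesis by blast
qed

lemma continuous_on_x_ln: "continuous_on {0..} (\<lambda>x::real. x * ln x)"
  unfolding continuous_on_eq_continuous_within
proof
  fix x :: real
  assume "x \<in> {0..}"
  show "continuous (at x within {0..}) (\<lambda>x. x * ln x)"
  proof (cases "x = 0")
    case True
    have "((\<lambda>x::real. x * ln x) \<longlongrightarrow> 0) (at_right 0)" by real_asymp
    then show ?thesis using True by (simp add: continuous_within at_within_Ici_at_right)
  next
    case False
    with \<open>x \<in> {0..}\<close> have "isCont (\<lambda>x. x * ln x) x" by (auto intro!: continuous_intros)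
    then show ?thesis by (rule continuous_at_imp_continuous_at_within)
  qed
qed

lemma sum_powr_pos:
  assumes "feasible n P lam"
  shows "0 < (\<Sum>k<n. lam k powr \<alpha>)"
proof -
  have "\<exists>k<n. lam k \<noteq> 0"
  proof (rule ccontr)
    assume "\<not> (\<exists>k<n. lam k \<noteq> 0)"
    then have "(\<Sum>k<n. lam k) = 0" by simp
    with assms show False by (simp add: feasible_def)
  qed
  then obtain k where k: "k < n" "lam k \<noteq> 0" by blast
  then have "0 < lam k powr \<alpha>" by simp
  also have "\<dots> \<le> (\<Sum>k<n. lam k powr \<alpha>)"
    using k by (intro member_le_sum) auto
  finally show ?thesis .
qed

lemma feasible_le_one:
  assumes "feasible n P lam" "k < n"
  shows "lam k \<le> 1"
proof -
  have "lam k \<le> (\<Sum>k<n. lam k)"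
    using assms by (intro member_le_sum) (auto simp: feasible_def)
  then show ?thesis using assms(1) by (simp add: feasible_def)
qed

(* feasible only constrains the entries below n; setting the others to 0 yields a compact
   set of representatives. *)
definition cut_off :: "nat \<Rightarrow> (nat \<Rightarrow> real) \<Rightarrow> nat \<Rightarrow> real" where
  "cut_off n f k = (if k < n then f k else 0)"

lemma sum_cut_off: "(\<Sum>k<n. h (cut_off n f k)) = (\<Sum>k<n. h (f k))"
  by (intro sum.cong) (auto simp: cut_off_def)

lemma feasible_cut_off: "feasible n P (cut_off n f) \<longleftrightarrow> feasible n P f"
  using sum_cut_off[of "\<lambda>x. x" n f] sum_cut_off[of "\<lambda>x. x\<^sup>2" n f]
  by (auto simp: feasible_def cut_off_def)

lemma renyi_cut_off: "renyi \<alpha> n (cut_off n f) = renyi \<alpha> n f"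
  using sum_cut_off[of "\<lambda>x. x * ln x" n f] sum_cut_off[of "\<lambda>x. x powr \<alpha>" n f]
  by (simp add: renyi_def)

definition feasible_set :: "nat \<Rightarrow> real \<Rightarrow> (nat \<Rightarrow> real) set" where
  "feasible_set n P = {f. feasible n P f \<and> (\<forall>k\<ge>n. f k = 0)}"

lemma cut_off_in_feasible_set: "feasible n P f \<Longrightarrow> cut_off n f \<in> feasible_set n P"
  by (simp add: feasible_set_def feasible_cut_off cut_off_def)

lemma compact_feasible_set: "compact (feasible_set n P)"
proof -
  define S where "S k = (if k < n then {0..1::real} else {0})" for k
  have "compactin (product_topology (\<lambda>_. euclidean) UNIV) (PiE UNIV S)"
    unfolding compactin_PiE by (auto simp: S_def)
  then have "compact (PiE UNIV S)" by (simp add: euclidean_product_topology)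
  moreover have "closed {f::nat \<Rightarrow> real. (\<Sum>k<n. f k) = 1}"
    by (intro closed_Collect_eq continuous_intros continuous_on_product_coordinates)
  moreover have "closed {f::nat \<Rightarrow> real. (\<Sum>k<n. (f k)\<^sup>2) = P}"
    by (intro closed_Collect_eq continuous_intros continuous_on_product_coordinates)
  ultimately have "compact (PiE UNIV S \<inter> {f. (\<Sum>k<n. f k) = 1} \<inter> {f. (\<Sum>k<n. (f k)\<^sup>2) = P})"
    by (intro compact_Int_closed) auto
  also have "\<dots> = feasible_set n P"
  proof (intro set_eqI iffI)
    fix f assume "f \<in> feasible_set n P"
    then show "f \<in> PiE UNIV S \<inter> {f. (\<Sum>k<n. f k) = 1} \<inter> {f. (\<Sum>k<n. (f k)\<^sup>2) = P}"
      using feasible_le_one[of n P f] by (auto simp: feasible_set_def feasible_def S_def PiE_iff)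
  next
    fix f assume f: "f \<in> PiE UNIV S \<inter> {f. (\<Sum>k<n. f k) = 1} \<inter> {f. (\<Sum>k<n. (f k)\<^sup>2) = P}"
    then have Sk: "f k \<in> S k" for k by (meson IntD1 PiE_mem UNIV_I)
    have "0 \<le> f k" for k
      using Sk[of k] by (auto simp: S_def split: if_splits)
    moreover have "f k = 0" if "n \<le> k" for k
      using Sk[of k] that by (simp add: S_def)
    ultimately show "f \<in> feasible_set n P" using f by (simp add: feasible_set_def feasible_def)
  qed
  finally show ?thesis .
qed

lemma continuous_on_renyi:
  assumes "0 < \<alpha>"
  shows "continuous_on (feasible_set n P) (renyi \<alpha> n)"
proof -
  have coord: "continuous_on (feasible_set n P) (\<lambda>f. f k)" for k
    by (rule continuous_on_subset[OF continuous_on_product_coordinates]) simp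
  have nonneg: "0 \<le> f k" if "f \<in> feasible_set n P" for f k
    using that by (cases "k < n") (auto simp: feasible_set_def feasible_def)
  then have coord_nonneg: "(\<lambda>f. f k) ` feasible_set n P \<subseteq> {0..}" for k
    by auto
  have x_ln: "continuous_on (feasible_set n P) (\<lambda>f. f k * ln (f k))" for k
    using continuous_on_compose2[OF continuous_on_x_ln coord coord_nonneg] .
  have powr: "continuous_on (feasible_set n P) (\<lambda>f. f k powr \<alpha>)" for k
    using assms nonneg by (intro continuous_on_powr' coord) auto
  show ?thesis
  proof (cases "\<alpha> = 1")
    case True
    then have "renyi \<alpha> n = (\<lambda>f. - (\<Sum>k<n. f k * ln (f k)))"
      by (simp add: renyi_def[abs_def])
    then show ?thesis by (simp add: continuous_on_minus continuous_on_sum x_ln)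
  next
    case False
    then have "renyi \<alpha> n = (\<lambda>f. ln (\<Sum>k<n. f k powr \<alpha>) / (1 - \<alpha>))"
      by (simp add: renyi_def[abs_def])
    moreover have "(\<Sum>k<n. f k powr \<alpha>) \<noteq> 0" if "f \<in> feasible_set n P" for f
      using sum_powr_pos[of n P f \<alpha>] that by (simp add: feasible_set_def)
    ultimately show ?thesis
      using False by (auto intro!: continuous_on_divide continuous_on_ln continuous_on_sum powr)
  qed
qed

lemma
  assumes "0 < \<alpha>" "feasible n P f0"
  shows renyi_attains_min:
      "\<exists>lam. feasible n P lam \<and> (\<forall>mu. feasible n P mu \<longrightarrow> renyi \<alpha> n lam \<le> renyi \<alpha> n mu)"
    and renyi_attains_max:
      "\<exists>lam. feasible n P lam \<and> (\<forall>mu. feasible n P mu \<longrightarrow> renyi \<alpha> n mu \<le> renyi \<alpha> n lam)"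
proof -
  have ne: "feasible_set n P \<noteq> {}" using cut_off_in_feasible_set[OF assms(2)] by blast
  note attains = compact_feasible_set ne continuous_on_renyi[OF assms(1)]
  have extremal: "feasible n P lam \<and> (\<forall>mu. feasible n P mu \<longrightarrow> R (renyi \<alpha> n lam) (renyi \<alpha> n mu))"
    if "lam \<in> feasible_set n P" "\<forall>f\<in>feasible_set n P. R (renyi \<alpha> n lam) (renyi \<alpha> n f)"
    for lam and R :: "real \<Rightarrow> real \<Rightarrow> bool"
  proof (intro conjI allI impI)
    show "feasible n P lam" using that(1) by (simp add: feasible_set_def)
    fix mu assume "feasible n P mu"
    then have "R (renyi \<alpha> n lam) (renyi \<alpha> n (cut_off n mu))"
      using that(2) cut_off_in_feasible_set by blast
    then show "R (renyi \<alpha> n lam) (renyi \<alpha> n mu)" by (simp add: renyi_cut_off)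
  qed
  show "\<exists>lam. feasible n P lam \<and> (\<forall>mu. feasible n P mu \<longrightarrow> renyi \<alpha> n lam \<le> renyi \<alpha> n mu)"
    using continuous_attains_inf[OF attains] extremal[where R = "(\<le>)"] by blast
  show "\<exists>lam. feasible n P lam \<and> (\<forall>mu. feasible n P mu \<longrightarrow> renyi \<alpha> n mu \<le> renyi \<alpha> n lam)"
    using continuous_attains_sup[OF attains] extremal[where R = "\<lambda>x y. y \<le> x"] by blast
qed

(* Twice the signed area of the triangle with vertices (x, f x), (y, f y), (z, f z). *)
definition collinearity_det :: "(real \<Rightarrow> real) \<Rightarrow> real \<Rightarrow> real \<Rightarrow> real \<Rightarrow> real" where
  "collinearity_det f x y z = f x * (y - z) + f y * (z - x) + f z * (x - y)"

lemma collinearity_det_nonzero: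
  assumes "0 < x" "0 < y" "0 < z" "x \<noteq> y" "y \<noteq> z" "x \<noteq> z"
    and deriv: "\<And>t. 0 < t \<Longrightarrow> (f has_real_derivative f' t) (at t)"
    and inj: "inj_on f' {0<..}"
  shows "collinearity_det f x y z \<noteq> 0"
proof -
  have sorted: "collinearity_det f a b c \<noteq> 0" if abc: "0 < a" "a < b" "b < c" for a b c
  proof -
    obtain p where p: "a < p" "p < b" "f b - f a = (b - a) * f' p"
      using MVT2[OF abc(2), of f f'] deriv abc by force
    obtain q where q: "b < q" "q < c" "f c - f b = (c - b) * f' q"
      using MVT2[OF abc(3), of f f'] deriv abc by force
    have "f' p \<noteq> f' q"
      using inj p q abc by (auto dest: inj_onD)
    moreover have "collinearity_det f a b c = (b - a) * (c - b) * (f' p - f' q)"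
    proof -
      have fb: "f b = f a + (b - a) * f' p" and fc: "f c = f a + (b - a) * f' p + (c - b) * f' q"
        using p(3) q(3) by simp_all
      show ?thesis unfolding collinearity_det_def fc fb by (simp add: algebra_simps)
    qed
    ultimately show ?thesis using abc by simp
  qed
  have swap: "collinearity_det f x z y = - collinearity_det f x y z"
    "collinearity_det f y x z = - collinearity_det f x y z"
    "collinearity_det f y z x = collinearity_det f x y z"
    "collinearity_det f z x y = collinearity_det f x y z"
    "collinearity_det f z y x = - collinearity_det f x y z"
    by (simp_all add: collinearity_det_def algebra_simps)
  consider "x < y" "y < z" | "x < z" "z < y" | "y < x" "x < z" | "y < z" "z < x"
    | "z < x" "x < y" | "z < y" "y < x"
    using assms(4-6) by linarith
  then show ?thesis
    by cases (use sorted[of x y z] sorted[of x z y] sorted[of y x z] sorted[of y z x]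
        sorted[of z x y] sorted[of z y x] swap assms(1-3) in simp_all)
qed

lemma DERIV_nonzero_crosses:
  fixes \<phi> :: "real \<Rightarrow> real"
  assumes "(\<phi> has_real_derivative L) (at x)" "L \<noteq> 0" "eventually Q (at x)"
  shows "\<exists>s t. Q s \<and> \<phi> s < \<phi> x \<and> Q t \<and> \<phi> x < \<phi> t"
proof -
  obtain d where d: "0 < d" "\<And>y. y \<noteq> x \<Longrightarrow> dist y x < d \<Longrightarrow> Q y"
    using assms(3) by (auto simp: eventually_at)
  have pos: "\<exists>s t. Q s \<and> \<psi> s < \<psi> x \<and> Q t \<and> \<psi> x < \<psi> t"
    if \<psi>: "(\<psi> has_real_derivative M) (at x)" "0 < M" for \<psi> M
  proof -
    obtain d1 where d1: "0 < d1" "\<And>h. 0 < h \<Longrightarrow> h < d1 \<Longrightarrow> \<psi> x < \<psi> (x + h)"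
      using DERIV_pos_inc_right[OF \<psi>] by blast
    obtain d2 where d2: "0 < d2" "\<And>h. 0 < h \<Longrightarrow> h < d2 \<Longrightarrow> \<psi> (x - h) < \<psi> x"
      using DERIV_pos_inc_left[OF \<psi>] by blast
    define h where "h = min d (min d1 d2) / 2"
    have h: "0 < h" "h < d" "h < d1" "h < d2"
      using d(1) d1(1) d2(1) by (auto simp: h_def)
    then have "Q (x - h)" "Q (x + h)"
      using d(2)[of "x - h"] d(2)[of "x + h"] by (auto simp: dist_real_def)
    then show ?thesis using h d1(2) d2(2) by blast
  qed
  show ?thesis
  proof (cases "0 < L")
    case True
    then show ?thesis using pos[OF assms(1)] by blast
  next
    case False
    then have "((\<lambda>t. - \<phi> t) has_real_derivative - L) (at x)" "0 < - L"
      using assms(1,2) by (auto intro: DERIV_minus)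
    then show ?thesis using pos[of "\<lambda>t. - \<phi> t" "- L"] by auto
  qed
qed

lemma constraint_curve:
  fixes x y z :: real
  assumes "x \<noteq> y"
  obtains u v where "u 0 = x" "v 0 = y"
    "(u has_real_derivative (y - z) / (x - y)) (at 0)"
    "(v has_real_derivative (z - x) / (x - y)) (at 0)"
    "\<forall>\<^sub>F t in at 0. u t + v t + (z + t) = x + y + z \<and>
        (u t)\<^sup>2 + (v t)\<^sup>2 + (z + t)\<^sup>2 = x\<^sup>2 + y\<^sup>2 + z\<^sup>2"
proof -
  (* The constraints fix u t + v t and (u t)^2 + (v t)^2, hence (u t - v t)^2 = D t. *)
  define D where "D t = 2 * (x\<^sup>2 + y\<^sup>2 + z\<^sup>2 - (z + t)\<^sup>2) - (x + y - t)\<^sup>2" for t :: real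
  define R where "R t = sqrt (D t / D 0)" for t
  define u where "u t = (x + y - t + (x - y) * R t) / 2" for t
  define v where "v t = (x + y - t - (x - y) * R t) / 2" for t
  have D0: "D 0 = (x - y)\<^sup>2" by (simp add: D_def power2_eq_square algebra_simps)
  with assms have D0_pos: "0 < D 0" by simp
  have "(D has_real_derivative 2 * (x + y) - 4 * z) (at 0)"
    unfolding D_def by (auto intro!: derivative_eq_intros simp: algebra_simps)
  then have dD: "((\<lambda>t. D t / D 0) has_real_derivative (2 * (x + y) - 4 * z) / D 0) (at 0)"
    by (rule DERIV_cdivide)
  have "(R has_real_derivative inverse (sqrt (D 0 / D 0)) / 2 * ((2 * (x + y) - 4 * z) / D 0)) (at 0)"
    unfolding R_def using D0_pos by (intro DERIV_chain2[OF DERIV_real_sqrt dD]) simp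
  then have "((\<lambda>t. (x - y) * R t) has_real_derivative
      (x - y) * (inverse (sqrt (D 0 / D 0)) / 2 * ((2 * (x + y) - 4 * z) / D 0))) (at 0)"
    by (rule DERIV_cmult)
  moreover have "(x - y) * (inverse (sqrt (D 0 / D 0)) / 2 * ((2 * (x + y) - 4 * z) / D 0))
      = (x + y - 2 * z) / (x - y)"
    using assms D0_pos unfolding D0 by (simp add: field_simps power2_eq_square)
  ultimately have dR: "((\<lambda>t. (x - y) * R t) has_real_derivative (x + y - 2 * z) / (x - y)) (at 0)"
    by simp
  have R0: "R 0 = 1" using D0_pos by (simp add: R_def)
  have "((\<lambda>t. D t / D 0) \<longlongrightarrow> 1) (at 0)"
    using DERIV_isCont[OF dD] D0_pos by (simp add: isCont_def)
  then have "eventually (\<lambda>t. 0 < D t / D 0) (at 0)"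
    by (rule order_tendstoD(1)) simp
  then have "\<forall>\<^sub>F t in at 0. u t + v t + (z + t) = x + y + z \<and>
      (u t)\<^sup>2 + (v t)\<^sup>2 + (z + t)\<^sup>2 = x\<^sup>2 + y\<^sup>2 + z\<^sup>2"
  proof (rule eventually_mono)
    fix t assume "0 < D t / D 0"
    then have "((x - y) * R t)\<^sup>2 = D t"
      using D0_pos unfolding power_mult_distrib R_def D0 by simp
    then show "u t + v t + (z + t) = x + y + z \<and> (u t)\<^sup>2 + (v t)\<^sup>2 + (z + t)\<^sup>2 = x\<^sup>2 + y\<^sup>2 + z\<^sup>2"
      by (simp add: u_def v_def D_def power2_eq_square field_simps)
  qed
  moreover have "u 0 = x" "v 0 = y" by (simp_all add: u_def v_def R0)
  moreover have "(u has_real_derivative (y - z) / (x - y)) (at 0)"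
  proof -
    have "(u has_real_derivative (0 - 1 + (x + y - 2 * z) / (x - y)) / 2) (at 0)"
      unfolding u_def by (intro DERIV_cdivide DERIV_add DERIV_diff DERIV_const DERIV_ident dR)
    then show ?thesis by (rule DERIV_cong) (use assms in \<open>simp add: field_simps\<close>)
  qed
  moreover have "(v has_real_derivative (z - x) / (x - y)) (at 0)"
  proof -
    have "(v has_real_derivative (0 - 1 - (x + y - 2 * z) / (x - y)) / 2) (at 0)"
      unfolding v_def by (intro DERIV_cdivide DERIV_diff DERIV_const DERIV_ident dR)
    then show ?thesis by (rule DERIV_cong) (use assms in \<open>simp add: field_simps\<close>)
  qed
  ultimately show thesis using that by blast
qed

lemma sum_not_extremal_at_three_entries:
  fixes lam :: "nat \<Rightarrow> real" and g g' :: "real \<Rightarrow> real"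
  assumes feas: "feasible n P lam"
    and idx: "i < n" "j < n" "k < n" "i \<noteq> j" "i \<noteq> k" "j \<noteq> k"
    and pos: "0 < lam i" "0 < lam j" "0 < lam k" and ij: "lam i \<noteq> lam j"
    and deriv: "\<And>t. 0 < t \<Longrightarrow> (g has_real_derivative g' t) (at t)"
    and det: "collinearity_det g' (lam i) (lam j) (lam k) \<noteq> 0"
  shows "\<exists>mu1 mu2. feasible n P mu1 \<and> feasible n P mu2 \<and>
    (\<Sum>l<n. g (mu1 l)) < (\<Sum>l<n. g (lam l)) \<and> (\<Sum>l<n. g (lam l)) < (\<Sum>l<n. g (mu2 l))"
proof -
  define x y z where "x = lam i" and "y = lam j" and "z = lam k"
  obtain u v where uv0: "u 0 = x" "v 0 = y"
    and du: "(u has_real_derivative (y - z) / (x - y)) (at 0)"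
    and dv: "(v has_real_derivative (z - x) / (x - y)) (at 0)"
    and curve: "\<forall>\<^sub>F t in at 0. u t + v t + (z + t) = x + y + z \<and>
        (u t)\<^sup>2 + (v t)\<^sup>2 + (z + t)\<^sup>2 = x\<^sup>2 + y\<^sup>2 + z\<^sup>2"
    using constraint_curve[of x y z] ij by (auto simp: x_def y_def)
  define mu where "mu t = lam(i := u t, j := v t, k := z + t)" for t
  define \<phi> where "\<phi> t = g (u t) + g (v t) + g (z + t)" for t
  have split: "(\<Sum>l<n. h (w l)) = h (w i) + h (w j) + h (w k) + (\<Sum>l\<in>{..<n} - {i, j, k}. h (w l))"
    for h :: "real \<Rightarrow> real" and w
    using idx by (subst sum.subset_diff[of "{i, j, k}"]) auto
  have "(\<Sum>l\<in>{..<n} - {i, j, k}. h (mu t l)) = (\<Sum>l\<in>{..<n} - {i, j, k}. h (lam l))"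
    for h :: "real \<Rightarrow> real" and t
    by (intro sum.cong) (auto simp: mu_def)
  then have sum_mu: "(\<Sum>l<n. h (mu t l)) = (\<Sum>l<n. h (lam l)) + (h (u t) + h (v t) + h (z + t)) - (h x + h y + h z)"
    for h :: "real \<Rightarrow> real" and t
    using split[of h "mu t"] split[of h lam] idx by (simp add: mu_def x_def y_def z_def)
  have dz: "((\<lambda>t. z + t) has_real_derivative 1) (at 0)"
    by (auto intro!: derivative_eq_intros)
  have "((\<lambda>t. g (u t)) has_real_derivative g' x * ((y - z) / (x - y))) (at 0)"
    using DERIV_chain2[OF deriv du] pos uv0 by (simp add: x_def)
  moreover have "((\<lambda>t. g (v t)) has_real_derivative g' y * ((z - x) / (x - y))) (at 0)"
    using DERIV_chain2[OF deriv dv] pos uv0 by (simp add: y_def)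
  moreover have "((\<lambda>t. g (z + t)) has_real_derivative g' z * 1) (at 0)"
    using DERIV_chain2[OF deriv[of "z + 0"] dz] pos by (simp add: z_def)
  ultimately have "(\<phi> has_real_derivative
      g' x * ((y - z) / (x - y)) + g' y * ((z - x) / (x - y)) + g' z * 1) (at 0)"
    unfolding \<phi>_def by (intro DERIV_add)
  moreover have "g' x * ((y - z) / (x - y)) + g' y * ((z - x) / (x - y)) + g' z * 1
      = collinearity_det g' x y z / (x - y)"
    using ij by (simp add: x_def [symmetric] y_def [symmetric] collinearity_det_def add_divide_distrib)
  ultimately have d\<phi>: "(\<phi> has_real_derivative collinearity_det g' x y z / (x - y)) (at 0)"
    by simp
  have "\<forall>\<^sub>F t in at 0. 0 < f t" if "isCont f 0" "0 < f 0" for f :: "real \<Rightarrow> real"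
    using that unfolding isCont_def by (rule order_tendstoD(1))
  then have "\<forall>\<^sub>F t in at 0. 0 < u t \<and> 0 < v t \<and> 0 < z + t"
    using DERIV_isCont[OF du] DERIV_isCont[OF dv] pos uv0
    by (auto intro!: eventually_conj simp: x_def y_def z_def)
  with curve have "\<forall>\<^sub>F t in at 0. feasible n P (mu t)"
  proof (rule eventually_elim2)
    fix t assume c: "u t + v t + (z + t) = x + y + z \<and> (u t)\<^sup>2 + (v t)\<^sup>2 + (z + t)\<^sup>2 = x\<^sup>2 + y\<^sup>2 + z\<^sup>2"
      and p: "0 < u t \<and> 0 < v t \<and> 0 < z + t"
    show "feasible n P (mu t)"
      using feas c p sum_mu[of "\<lambda>a. a" t] sum_mu[of "\<lambda>a. a\<^sup>2" t]
      by (auto simp: feasible_def mu_def)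
  qed
  moreover have "collinearity_det g' x y z / (x - y) \<noteq> 0"
    using det ij by (simp add: x_def y_def z_def)
  ultimately obtain s t where st: "feasible n P (mu s)" "\<phi> s < \<phi> 0" "feasible n P (mu t)" "\<phi> 0 < \<phi> t"
    using DERIV_nonzero_crosses[OF d\<phi>] by blast
  have "\<phi> 0 = g x + g y + g z" by (simp add: \<phi>_def uv0)
  then show ?thesis
    using st sum_mu[of g s] sum_mu[of g t] by (intro exI[of _ "mu s"] exI[of _ "mu t"]) (auto simp: \<phi>_def)
qed

lemma sum_not_extremal_if_not_two_valued:
  fixes g g' g'' :: "real \<Rightarrow> real"
  assumes feas: "feasible n P lam" and "\<not> two_valued n lam"
    and deriv: "\<And>t. 0 < t \<Longrightarrow> (g has_real_derivative g' t) (at t)"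
    and deriv2: "\<And>t. 0 < t \<Longrightarrow> (g' has_real_derivative g'' t) (at t)"
    and inj: "inj_on g'' {0<..}"
  shows "\<exists>mu1 mu2. feasible n P mu1 \<and> feasible n P mu2 \<and>
    (\<Sum>l<n. g (mu1 l)) < (\<Sum>l<n. g (lam l)) \<and> (\<Sum>l<n. g (lam l)) < (\<Sum>l<n. g (mu2 l))"
proof -
  have "3 \<le> card (lam ` {..<n} - {0})"
    using assms(2) by (simp add: two_valued_def)
  then obtain T where T: "T \<subseteq> lam ` {..<n} - {0}" "card T = 3"
    by (rule obtain_subset_with_card_n)
  then obtain x y z where "T = {x, y, z}" "x \<noteq> y" "y \<noteq> z" "x \<noteq> z"
    by (metis card_3_iff)
  with T(1) have xyz: "x \<in> lam ` {..<n} - {0}" "y \<in> lam ` {..<n} - {0}" "z \<in> lam ` {..<n} - {0}"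
    "x \<noteq> y" "y \<noteq> z" "x \<noteq> z"
    by auto
  then obtain i j k where ijk: "i < n" "j < n" "k < n" "lam i = x" "lam j = y" "lam k = z"
    by blast
  have pos: "0 < x" "0 < y" "0 < z"
    using xyz feas by (force simp: feasible_def)+
  have "collinearity_det g' x y z \<noteq> 0"
    using collinearity_det_nonzero[OF pos xyz(4-6) deriv2 inj] .
  then show ?thesis
    using sum_not_extremal_at_three_entries[OF feas ijk(1-3) _ _ _ _ _ _ _ deriv] ijk xyz pos by auto
qed

(* The factor 1 - alpha makes H_alpha strictly increasing in the sum of these terms,
   for alpha < 1 and alpha > 1 alike. *)
definition renyi_term :: "real \<Rightarrow> real \<Rightarrow> real" where
  "renyi_term \<alpha> t = (if \<alpha> = 1 then - (t * ln t) else (1 - \<alpha>) * t powr \<alpha>)"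

lemma renyi_less_iff:
  assumes "0 < \<alpha>" "feasible n P lam" "feasible n P mu"
  shows "renyi \<alpha> n lam < renyi \<alpha> n mu \<longleftrightarrow>
    (\<Sum>k<n. renyi_term \<alpha> (lam k)) < (\<Sum>k<n. renyi_term \<alpha> (mu k))"
proof (cases "\<alpha> = 1")
  case True
  then show ?thesis by (simp add: renyi_def renyi_term_def sum_negf)
next
  case False
  define A B where "A = (\<Sum>k<n. lam k powr \<alpha>)" and "B = (\<Sum>k<n. mu k powr \<alpha>)"
  have "0 < A" "0 < B" using sum_powr_pos assms(2,3) by (auto simp: A_def B_def)
  then have "ln A / (1 - \<alpha>) < ln B / (1 - \<alpha>) \<longleftrightarrow> (1 - \<alpha>) * A < (1 - \<alpha>) * B"
    using False by (cases "\<alpha> < 1") (auto simp: divide_less_cancel mult_less_cancel_left)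
  then show ?thesis
    using False by (simp add: renyi_def renyi_term_def A_def B_def sum_distrib_left)
qed

lemma renyi_term_derivatives:
  assumes "0 < \<alpha>" "\<alpha> \<noteq> 2"
  obtains g' g'' :: "real \<Rightarrow> real"
  where "\<And>t. 0 < t \<Longrightarrow> (renyi_term \<alpha> has_real_derivative g' t) (at t)"
    and "\<And>t. 0 < t \<Longrightarrow> (g' has_real_derivative g'' t) (at t)"
    and "inj_on g'' {0<..}"
proof (cases "\<alpha> = 1")
  case True
  show thesis
  proof (rule that)
    show "(renyi_term \<alpha> has_real_derivative - (ln t + 1)) (at t)" if "0 < t" for t
      using that True unfolding renyi_term_def[abs_def] by (auto intro!: derivative_eq_intros)
    show "((\<lambda>t. - (ln t + 1)) has_real_derivative - inverse t) (at t)" if "0 < t" for t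
      using that by (auto intro!: derivative_eq_intros simp: divide_inverse)
    show "inj_on (\<lambda>t::real. - inverse t) {0<..}"
      by (auto intro: inj_onI)
  qed
next
  case False
  define c where "c = (1 - \<alpha>) * \<alpha>"
  have "c \<noteq> 0" "\<alpha> - 2 \<noteq> 0" using assms False by (auto simp: c_def)
  show thesis
  proof (rule that)
    show "(renyi_term \<alpha> has_real_derivative c * t powr (\<alpha> - 1)) (at t)" if "0 < t" for t
      using that False unfolding renyi_term_def[abs_def] c_def
      by (auto intro!: derivative_eq_intros simp: algebra_simps)
    show "((\<lambda>t. c * t powr (\<alpha> - 1)) has_real_derivative c * (\<alpha> - 1) * t powr (\<alpha> - 2)) (at t)"
      if "0 < t" for t
      using that by (auto intro!: derivative_eq_intros simp: algebra_simps)
    have "u = v" if "0 < u" "0 < v" "u powr (\<alpha> - 2) = v powr (\<alpha> - 2)" for u v :: real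
    proof -
      have "(\<alpha> - 2) * ln u = (\<alpha> - 2) * ln v"
        using arg_cong[OF that(3), of ln] that(1,2) by (simp add: ln_powr)
      then show "u = v" using \<open>\<alpha> - 2 \<noteq> 0\<close> that(1,2) by simp
    qed
    then show "inj_on (\<lambda>t. c * (\<alpha> - 1) * t powr (\<alpha> - 2)) {0<..}"
      using \<open>c \<noteq> 0\<close> False by (auto intro!: inj_onI)
  qed
qed

lemma renyi_not_extremal_if_not_two_valued:
  assumes "0 < \<alpha>" "\<alpha> \<noteq> 2" "feasible n P lam" "\<not> two_valued n lam"
  shows "\<exists>mu. feasible n P mu \<and> renyi \<alpha> n mu < renyi \<alpha> n lam"
    and "\<exists>mu. feasible n P mu \<and> renyi \<alpha> n lam < renyi \<alpha> n mu"
proof -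
  obtain g' g'' where "\<And>t. 0 < t \<Longrightarrow> (renyi_term \<alpha> has_real_derivative g' t) (at t)"
    "\<And>t. 0 < t \<Longrightarrow> (g' has_real_derivative g'' t) (at t)" "inj_on g'' {0<..}"
    using renyi_term_derivatives[OF assms(1,2)] by blast
  then obtain mu1 mu2 where "feasible n P mu1" "feasible n P mu2"
    "(\<Sum>k<n. renyi_term \<alpha> (mu1 k)) < (\<Sum>k<n. renyi_term \<alpha> (lam k))"
    "(\<Sum>k<n. renyi_term \<alpha> (lam k)) < (\<Sum>k<n. renyi_term \<alpha> (mu2 k))"
    using sum_not_extremal_if_not_two_valued[OF assms(3,4)] by blast
  then show "\<exists>mu. feasible n P mu \<and> renyi \<alpha> n mu < renyi \<alpha> n lam"
    and "\<exists>mu. feasible n P mu \<and> renyi \<alpha> n lam < renyi \<alpha> n mu"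
    using renyi_less_iff[OF assms(1)] assms(3) by blast+
qed

lemma renyi_2_eq:
  assumes "feasible n P lam"
  shows "renyi 2 n lam = - ln P"
proof -
  have "(\<Sum>k<n. lam k powr 2) = (\<Sum>k<n. (lam k)\<^sup>2)"
    using assms by (intro sum.cong) (auto simp: feasible_def powr_numeral)
  then show ?thesis using assms by (simp add: renyi_def feasible_def)
qed

lemma one_vs_rest_candidate:
  assumes "2 \<le> n" "1 / real n \<le> P" "P \<le> 1"
  shows "(1, n - 1, 1) \<in> cands n P"
proof -
  have n: "real (1 + (n - 1)) = real n" "real (n - 1) = real n - 1"
    using assms(1) by auto
  have Pn: "1 \<le> P * real n"
    using assms(1,2) by (simp add: field_simps)
  then have "0 \<le> aval P 1 (n - 1) 1"
    unfolding aval_def n using assms(1) by (intro divide_nonneg_nonneg) auto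
  moreover have "P * real n - 1 \<le> real n - 1"
    using assms(1,3) by (simp add: mult_left_le_one_le)
  then have "0 \<le> bval P 1 (n - 1) 1"
    unfolding bval_def n using assms(1) by simp
  ultimately show ?thesis
    using assms(1) Pn by (simp add: cands_def n)
qed

lemma finite_cands: "finite (cands n P)"
proof (rule finite_subset)
  show "cands n P \<subseteq> {..n} \<times> {..n} \<times> {1, -1}" by (auto simp: cands_def)
qed auto

lemma renyi_two_valued_extremizers:
  assumes "2 \<le> n" "1 / real n \<le> P" "P \<le> 1" "0 < \<alpha>"
  shows "\<exists>lam. feasible n P lam \<and> two_valued n lam \<and>
      (\<forall>mu. feasible n P mu \<longrightarrow> renyi \<alpha> n lam \<le> renyi \<alpha> n mu)"
    and "\<exists>lam. feasible n P lam \<and> two_valued n lam \<and>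
      (\<forall>mu. feasible n P mu \<longrightarrow> renyi \<alpha> n mu \<le> renyi \<alpha> n lam)"
proof -
  define lam0 where "lam0 = block_vector 1 (n - 1) (aval P 1 (n - 1) 1) (bval P 1 (n - 1) 1)"
  have lam0: "feasible n P lam0" "two_valued n lam0"
    using feasible_candidate[OF one_vs_rest_candidate[OF assms(1-3)]] two_valued_block_vector
    by (simp_all add: lam0_def)
  show "\<exists>lam. feasible n P lam \<and> two_valued n lam \<and>
      (\<forall>mu. feasible n P mu \<longrightarrow> renyi \<alpha> n lam \<le> renyi \<alpha> n mu)"
  proof (cases "\<alpha> = 2")
    case True
    then show ?thesis using lam0 by (intro exI[of _ lam0]) (simp add: renyi_2_eq)
  next
    case False
    obtain lam where lam: "feasible n P lam" "\<forall>mu. feasible n P mu \<longrightarrow> renyi \<alpha> n lam \<le> renyi \<alpha> n mu"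
      using renyi_attains_min[OF assms(4) lam0(1)] by blast
    have "two_valued n lam"
    proof (rule ccontr)
      assume "\<not> two_valued n lam"
      then obtain mu where "feasible n P mu" "renyi \<alpha> n mu < renyi \<alpha> n lam"
        using renyi_not_extremal_if_not_two_valued(1)[OF assms(4) False lam(1)] by blast
      with lam(2) show False by fastforce
    qed
    with lam show ?thesis by blast
  qed
  show "\<exists>lam. feasible n P lam \<and> two_valued n lam \<and>
      (\<forall>mu. feasible n P mu \<longrightarrow> renyi \<alpha> n mu \<le> renyi \<alpha> n lam)"
  proof (cases "\<alpha> = 2")
    case True
    then show ?thesis using lam0 by (intro exI[of _ lam0]) (simp add: renyi_2_eq)
  next
    case False
    obtain lam where lam: "feasible n P lam" "\<forall>mu. feasible n P mu \<longrightarrow> renyi \<alpha> n mu \<le> renyi \<alpha> n lam"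
      using renyi_attains_max[OF assms(4) lam0(1)] by blast
    have "two_valued n lam"
    proof (rule ccontr)
      assume "\<not> two_valued n lam"
      then obtain mu where "feasible n P mu" "renyi \<alpha> n lam < renyi \<alpha> n mu"
        using renyi_not_extremal_if_not_two_valued(2)[OF assms(4) False lam(1)] by blast
      with lam(2) show False by fastforce
    qed
    with lam show ?thesis by blast
  qed
qed

lemma
  assumes "2 \<le> n" "feasible n P lam" "two_valued n lam"
  shows renyi_minimizer_eq_Min: "(\<forall>mu. feasible n P mu \<longrightarrow> renyi \<alpha> n lam \<le> renyi \<alpha> n mu)
      \<Longrightarrow> renyi \<alpha> n lam = Min (hval \<alpha> P ` cands n P)"
    and renyi_maximizer_eq_Max: "(\<forall>mu. feasible n P mu \<longrightarrow> renyi \<alpha> n mu \<le> renyi \<alpha> n lam)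
      \<Longrightarrow> renyi \<alpha> n lam = Max (hval \<alpha> P ` cands n P)"
proof -
  obtain c where c: "c \<in> cands n P" "renyi \<alpha> n lam = hval \<alpha> P c"
    using two_valued_renyi_in_candidates[OF assms(2,3,1)] by blast
  have fin: "finite (hval \<alpha> P ` cands n P)" "hval \<alpha> P ` cands n P \<noteq> {}"
    using finite_cands c(1) by auto
  have candidate_value: "\<exists>mu. feasible n P mu \<and> renyi \<alpha> n mu = v" if "v \<in> hval \<alpha> P ` cands n P" for v
  proof -
    from that obtain na nb s where "(na, nb, s) \<in> cands n P" "v = hval \<alpha> P (na, nb, s)" by auto
    then show ?thesis using feasible_candidate renyi_candidate by blast
  qed
  show "renyi \<alpha> n lam = Min (hval \<alpha> P ` cands n P)"
    if "\<forall>mu. feasible n P mu \<longrightarrow> renyi \<alpha> n lam \<le> renyi \<alpha> n mu"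
  proof (rule antisym)
    obtain mu where "feasible n P mu" "renyi \<alpha> n mu = Min (hval \<alpha> P ` cands n P)"
      using candidate_value[OF Min_in[OF fin]] by blast
    then show "renyi \<alpha> n lam \<le> Min (hval \<alpha> P ` cands n P)" using that by force
    show "Min (hval \<alpha> P ` cands n P) \<le> renyi \<alpha> n lam"
      unfolding c(2) using c(1) fin(1) by simp
  qed
  show "renyi \<alpha> n lam = Max (hval \<alpha> P ` cands n P)"
    if "\<forall>mu. feasible n P mu \<longrightarrow> renyi \<alpha> n mu \<le> renyi \<alpha> n lam"
  proof (rule antisym)
    show "renyi \<alpha> n lam \<le> Max (hval \<alpha> P ` cands n P)"
      unfolding c(2) using c(1) fin(1) by simp
    obtain mu where "feasible n P mu" "renyi \<alpha> n mu = Max (hval \<alpha> P ` cands n P)"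
      using candidate_value[OF Max_in[OF fin]] by blast
    then show "Max (hval \<alpha> P ` cands n P) \<le> renyi \<alpha> n lam" using that by force
  qed
qed

theorem lemma2:
  fixes n :: nat and P \<alpha> :: real
  assumes "2 \<le> n" and "1 / real n \<le> P" and "P \<le> 1" and "0 < \<alpha>"
  shows "(\<forall>na nb. 0 < na \<longrightarrow> 0 < nb \<longrightarrow> 1 \<le> P * real (na + nb) \<longrightarrow>
            (\<forall>a b. real na * a + real nb * b = 1 \<and> real na * a\<^sup>2 + real nb * b\<^sup>2 = P \<longleftrightarrow>
               (\<exists>s\<in>{1, -1::real}. a = aval P na nb s \<and> b = bval P na nb s)))
    \<and> (\<exists>lam. feasible n P lam \<and> two_valued n lam
           \<and> (\<forall>mu. feasible n P mu \<longrightarrow> renyi \<alpha> n lam \<le> renyi \<alpha> n mu)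
           \<and> renyi \<alpha> n lam = Min (hval \<alpha> P ` cands n P))
    \<and> (\<exists>lam. feasible n P lam \<and> two_valued n lam
           \<and> (\<forall>mu. feasible n P mu \<longrightarrow> renyi \<alpha> n mu \<le> renyi \<alpha> n lam)
           \<and> renyi \<alpha> n lam = Max (hval \<alpha> P ` cands n P))"
proof (intro conjI)
  show "\<forall>na nb. 0 < na \<longrightarrow> 0 < nb \<longrightarrow> 1 \<le> P * real (na + nb) \<longrightarrow>
      (\<forall>a b. real na * a + real nb * b = 1 \<and> real na * a\<^sup>2 + real nb * b\<^sup>2 = P \<longleftrightarrow>
        (\<exists>s\<in>{1, -1::real}. a = aval P na nb s \<and> b = bval P na nb s))"
    using two_value_system_iff by blast
  show "\<exists>lam. feasible n P lam \<and> two_valued n lam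
      \<and> (\<forall>mu. feasible n P mu \<longrightarrow> renyi \<alpha> n lam \<le> renyi \<alpha> n mu)
      \<and> renyi \<alpha> n lam = Min (hval \<alpha> P ` cands n P)"
    using renyi_two_valued_extremizers(1)[OF assms] renyi_minimizer_eq_Min[OF assms(1)] by blast
  show "\<exists>lam. feasible n P lam \<and> two_valued n lam
      \<and> (\<forall>mu. feasible n P mu \<longrightarrow> renyi \<alpha> n mu \<le> renyi \<alpha> n lam)
      \<and> renyi \<alpha> n lam = Max (hval \<alpha> P ` cands n P)"
    using renyi_two_valued_extremizers(2)[OF assms] renyi_maximizer_eq_Max[OF assms(1)] by blast
qed

end
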